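(* Let $\mathcal{S}=\{(x_i,y_i)\}_{i=1}^N$ be a training set, $K$ a continuous, real-valued, symmetric, shift-invariant positive definite kernel on $\mathbb{R}^d$ with RKHS $\mathcal{H}$ and spectral probability measure $\mathbb{P}(\omega)$, $\lambda>0$, $L(u,y)$ a loss convex in $u$ with $|L'(u,y)|<M$ (derivative in the first argument), $L$ and $L'$ $\mathcal{L}$-Lipschitz in the first argument, $K(x,x')\le\kappa$ for all $x,x'$, and $|\phi_\omega(x)\phi_\omega(x')|\le\phi$ for all $\omega,b,x,x'$. Let $f_t,h_t$ be the sequences defined in the context with constant step size $\gamma$ satisfying $\frac{1}{\lambda}>\gamma>0$. Then for any $x$, $$\mathbb{E}\big[|f_{t+1}(x)-h_{t+1}(x)|^2\big]\le C^2,\qquad C^2:=M^2(\sqrt{\kappa}+\sqrt{\phi})^2\gamma/\lambda.$$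
   Context: Random feature map: $\phi_\omega(x)=\sqrt{2}\cos(\omega^Tx+b)$ with $\omega\sim\mathbb{P}(\omega)$, $b\sim U[0,2\pi]$, so that $K(x,x')=\mathbb{E}_{\omega,b}[\phi_\omega(x)\phi_\omega(x')]$. Iterations: $f_1=h_1=0$; at iteration $t$ draw $(x_t,y_t)$ uniformly from $\mathcal{S}$ and $(\omega_t,b_t)$ independently, and set $f_{t+1}=f_t-\gamma\big(L'(f_t(x_t),y_t)\phi_{\omega_t}(x_t)\phi_{\omega_t}(\cdot)+\lambda f_t\big)$ and $h_{t+1}=h_t-\gamma\big(L'(f_t(x_t),y_t)K(x_t,\cdot)+\lambda h_t\big)$. The expectation is over all sampled data points and random features up to iteration $t$. *)

theory Defs
  imports "HOL-Probability.Probability"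
begin

definition rff :: "'a::euclidean_space \<Rightarrow> real \<Rightarrow> 'a \<Rightarrow> real" where
  "rff \<omega> b x = sqrt 2 * cos (\<omega> \<bullet> x + b)"

definition draw_measure :: "nat \<Rightarrow> 'a::euclidean_space measure \<Rightarrow> (nat \<times> 'a \<times> real) measure" where
  "draw_measure N P = measure_pmf (pmf_of_set {..<N}) \<Otimes>\<^sub>M (P \<Otimes>\<^sub>M uniform_measure lborel {0..2*pi})"

text \<open>Index shift: f_iter ... s t is the paper's f_(t+1),
  so f_iter ... s 0 = f_1 = 0.  The draw used at paper's iteration t+1 is s t.
  Ld is the derivative L' of the loss in its first argument.\<close>
fun f_iter :: "(real \<Rightarrow> real \<Rightarrow> real) \<Rightarrow> (nat \<Rightarrow> 'a::euclidean_space) \<Rightarrow> (nat \<Rightarrow> real)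
    \<Rightarrow> real \<Rightarrow> real \<Rightarrow> (nat \<Rightarrow> nat \<times> 'a \<times> real) \<Rightarrow> nat \<Rightarrow> 'a \<Rightarrow> real" where
  "f_iter Ld xs ys \<gamma> lam s 0 = (\<lambda>z. 0)"
| "f_iter Ld xs ys \<gamma> lam s (Suc t) =
     (let (i, \<omega>, b) = s t; ft = f_iter Ld xs ys \<gamma> lam s t in
      (\<lambda>z. ft z - \<gamma> * (Ld (ft (xs i)) (ys i) * rff \<omega> b (xs i) * rff \<omega> b z + lam * ft z)))"

fun h_iter :: "(real \<Rightarrow> real \<Rightarrow> real) \<Rightarrow> ('a::euclidean_space \<Rightarrow> 'a \<Rightarrow> real) \<Rightarrow> (nat \<Rightarrow> 'a) \<Rightarrow> (nat \<Rightarrow> real)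
    \<Rightarrow> real \<Rightarrow> real \<Rightarrow> (nat \<Rightarrow> nat \<times> 'a \<times> real) \<Rightarrow> nat \<Rightarrow> 'a \<Rightarrow> real" where
  "h_iter Ld K xs ys \<gamma> lam s 0 = (\<lambda>z. 0)"
| "h_iter Ld K xs ys \<gamma> lam s (Suc t) =
     (let (i, \<omega>, b) = s t; ft = f_iter Ld xs ys \<gamma> lam s t; ht = h_iter Ld K xs ys \<gamma> lam s t in
      (\<lambda>z. ht z - \<gamma> * (Ld (ft (xs i)) (ys i) * K (xs i) z + lam * ht z)))"

end

theory Submission
  imports Defs
begin

text \<open>
  Write \<open>g\<^sub>t = f\<^sub>t(x) - h\<^sub>t(x)\<close>. Both iterations use the same data point and the same
  coefficient \<open>L'(f\<^sub>t(x\<^sub>t), y\<^sub>t)\<close>, so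
  \<open>g\<^sub>t\<^sub>+\<^sub>1 = (1 - \<gamma>\<lambda>) g\<^sub>t - \<gamma> L'(f\<^sub>t(x\<^sub>t), y\<^sub>t) (\<phi>\<^sub>\<omega>(x\<^sub>t)\<phi>\<^sub>\<omega>(x) - K(x\<^sub>t, x))\<close>.
  Conditionally on the past, the last factor has mean zero (spectral representation of \<open>K\<close>)
  and second moment at most \<open>\<kappa> + 2\<close>, hence
  \<open>E g\<^sub>t\<^sub>+\<^sub>1\<^sup>2 \<le> (1 - \<gamma>\<lambda>)\<^sup>2 E g\<^sub>t\<^sup>2 + \<gamma>\<^sup>2 M\<^sup>2 (\<kappa> + 2)\<close>. Starting from \<open>g\<^sub>1 = 0\<close>, the
  second moment stays below the fixed point \<open>\<gamma>\<^sup>2 M\<^sup>2 (\<kappa> + 2) / (1 - (1 - \<gamma>\<lambda>)\<^sup>2) \<le> M\<^sup>2 (\<kappa> + 2) \<gamma> / \<lambda>\<close>,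
  and \<open>\<kappa> + 2 \<le> (\<surd>\<kappa> + \<surd>\<phi>)\<^sup>2\<close> because \<open>\<phi> \<ge> 2\<close>.
\<close>

lemma (in prob_space) nn_integral_square_centered_le:
  fixes X :: "'a \<Rightarrow> real"
  assumes X: "integrable M X" and X2: "integrable M (\<lambda>\<omega>. (X \<omega>)\<^sup>2)"
  shows "(\<integral>\<^sup>+\<omega>. ennreal ((a - \<beta> * (X \<omega> - expectation X))\<^sup>2) \<partial>M)
    \<le> ennreal (a\<^sup>2 + \<beta>\<^sup>2 * expectation (\<lambda>\<omega>. (X \<omega>)\<^sup>2))"
proof -
  define m where "m = expectation X"
  have expand: "(a - \<beta> * (X \<omega> - m))\<^sup>2 = (a + \<beta> * m)\<^sup>2 - 2 * (a + \<beta> * m) * \<beta> * X \<omega> + \<beta>\<^sup>2 * (X \<omega>)\<^sup>2" for \<omega>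
    by (simp add: power2_eq_square algebra_simps)
  have "integrable M (\<lambda>\<omega>. (a - \<beta> * (X \<omega> - m))\<^sup>2)"
    unfolding expand using X X2 by auto
  then have "(\<integral>\<^sup>+\<omega>. ennreal ((a - \<beta> * (X \<omega> - m))\<^sup>2) \<partial>M) = ennreal (expectation (\<lambda>\<omega>. (a - \<beta> * (X \<omega> - m))\<^sup>2))"
    by (intro nn_integral_eq_integral) auto
  also have "expectation (\<lambda>\<omega>. (a - \<beta> * (X \<omega> - m))\<^sup>2) = a\<^sup>2 - \<beta>\<^sup>2 * m\<^sup>2 + \<beta>\<^sup>2 * expectation (\<lambda>\<omega>. (X \<omega>)\<^sup>2)"
    unfolding expand using X X2 by (simp add: prob_space m_def[symmetric] power2_eq_square algebra_simps)
  also have "\<dots> \<le> a\<^sup>2 + \<beta>\<^sup>2 * expectation (\<lambda>\<omega>. (X \<omega>)\<^sup>2)"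
    by simp
  finally show ?thesis unfolding m_def by (simp add: ennreal_leI)
qed

abbreviation phase_measure :: "real measure" where
  "phase_measure \<equiv> uniform_measure lborel {0..2*pi}"

abbreviation feature_measure :: "'a::euclidean_space measure \<Rightarrow> ('a \<times> real) measure" where
  "feature_measure P \<equiv> P \<Otimes>\<^sub>M phase_measure"

lemma prob_space_phase_measure: "prob_space phase_measure"
  by (rule prob_space_uniform_measure) auto

lemma prob_space_feature_measure: "prob_space P \<Longrightarrow> prob_space (feature_measure P)"
  by (intro prob_space_pair prob_space_phase_measure)

lemma prob_space_draw_measure: "prob_space P \<Longrightarrow> prob_space (draw_measure N P)"
  unfolding draw_measure_def
  by (intro prob_space_pair prob_space_feature_measure prob_space_measure_pmf)

lemma rff_square_le: "(rff \<omega> b x)\<^sup>2 \<le> 2"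
proof -
  have "(cos (\<omega> \<bullet> x + b))\<^sup>2 \<le> 1"
    by (simp add: abs_square_le_1)
  then show ?thesis
    unfolding rff_def by (simp add: power_mult_distrib)
qed

lemma rff_product_square_le: "(rff \<omega> b x * rff \<omega> b z)\<^sup>2 \<le> (rff \<omega> b x)\<^sup>2 + 2"
proof -
  have "(rff \<omega> b x)\<^sup>2 * (rff \<omega> b z)\<^sup>2 \<le> (rff \<omega> b x)\<^sup>2 * 2"
    by (intro mult_left_mono rff_square_le) simp
  then show ?thesis
    using rff_square_le[of \<omega> b x] by (simp add: power_mult_distrib)
qed

lemma measurable_rff_feature [measurable]:
  assumes "sets P = sets borel"
  shows "(\<lambda>(\<omega>, b). rff \<omega> b x) \<in> borel_measurable (feature_measure P)"
  unfolding rff_def using assms by measurable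

lemma integrable_rff_product:
  assumes P: "prob_space P" "sets P = sets borel"
  shows "integrable (feature_measure P) (\<lambda>(\<omega>, b). rff \<omega> b x * rff \<omega> b z)"
proof -
  interpret F: prob_space "feature_measure P"
    using P(1) by (rule prob_space_feature_measure)
  have "\<bar>rff \<omega> b x * rff \<omega> b z\<bar> \<le> \<bar>2\<bar>" for \<omega> b
    using rff_product_square_le[of \<omega> b x z] rff_square_le[of \<omega> b x]
    unfolding abs_le_square_iff by simp
  then show ?thesis
    using P(2) by (intro F.integrable_const_bound[where B=2]) auto
qed

lemma integral_rff_product:
  assumes P: "prob_space P" "sets P = sets borel"
    and spectral: "K x z = (\<integral>\<omega>. (\<integral>b. rff \<omega> b x * rff \<omega> b z \<partial>phase_measure) \<partial>P)"
  shows "(\<integral>(\<omega>, b). rff \<omega> b x * rff \<omega> b z \<partial>feature_measure P) = K x z"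
proof -
  interpret pair_sigma_finite P phase_measure
    by (intro pair_sigma_finite.intro prob_space_imp_sigma_finite P(1) prob_space_phase_measure)
  show ?thesis
    using integral_fst'[OF integrable_rff_product[OF P]] spectral by simp
qed

lemma kernel_diag_nonneg:
  assumes "K x x = (\<integral>\<omega>. (\<integral>b. rff \<omega> b x * rff \<omega> b x \<partial>phase_measure) \<partial>P)"
  shows "0 \<le> K x x"
  unfolding assms by (auto intro!: Bochner_Integration.integral_nonneg)

lemma nn_integral_rff_noise_le:
  assumes P: "prob_space P" "sets P = sets borel"
    and spectral: "\<And>x z. K x z = (\<integral>\<omega>. (\<integral>b. rff \<omega> b x * rff \<omega> b z \<partial>phase_measure) \<partial>P)"
    and diag: "K x x \<le> \<kappa>"
  shows "(\<integral>\<^sup>+(\<omega>, b). ennreal ((a - \<beta> * (rff \<omega> b x * rff \<omega> b z - K x z))\<^sup>2) \<partial>feature_measure P)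
    \<le> ennreal (a\<^sup>2 + \<beta>\<^sup>2 * (\<kappa> + 2))"
proof -
  interpret F: prob_space "feature_measure P"
    using P(1) by (rule prob_space_feature_measure)
  define X where "X = (\<lambda>(\<omega>, b). rff \<omega> b x * rff \<omega> b z)"
  have X: "integrable (feature_measure P) X" and EX: "F.expectation X = K x z"
    unfolding X_def using integrable_rff_product[OF P] integral_rff_product[where K=K, OF P spectral[of x z]] by auto
  define Q where "Q = (\<lambda>(\<omega>, b). rff \<omega> b x * rff \<omega> b x)"
  have Q: "integrable (feature_measure P) Q" and EQ: "F.expectation Q = K x x"
    unfolding Q_def using integrable_rff_product[OF P] integral_rff_product[where K=K, OF P spectral[of x x]] by auto
  have X2_le: "(X w)\<^sup>2 \<le> Q w + 2" and Q_le: "Q w \<le> 2" for w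
    using rff_product_square_le rff_square_le
    unfolding X_def Q_def by (auto simp: power2_eq_square split: prod.split)
  have "(X w)\<^sup>2 \<le> 4" for w
    using X2_le[of w] Q_le[of w] by linarith
  then have X2: "integrable (feature_measure P) (\<lambda>w. (X w)\<^sup>2)"
    using X by (intro F.integrable_const_bound[where B=4]) auto
  have "F.expectation (\<lambda>w. (X w)\<^sup>2) \<le> F.expectation (\<lambda>w. Q w + 2)"
    using X2 Q X2_le by (intro integral_mono) auto
  also have "\<dots> = K x x + 2"
    using Q EQ by (simp add: F.prob_space)
  finally have EX2: "F.expectation (\<lambda>w. (X w)\<^sup>2) \<le> \<kappa> + 2"
    using diag by simp
  have "(\<integral>\<^sup>+(\<omega>, b). ennreal ((a - \<beta> * (rff \<omega> b x * rff \<omega> b z - K x z))\<^sup>2) \<partial>feature_measure P)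
      = (\<integral>\<^sup>+w. ennreal ((a - \<beta> * (X w - F.expectation X))\<^sup>2) \<partial>feature_measure P)"
    unfolding EX unfolding X_def by (simp add: case_prod_unfold)
  also have "\<dots> \<le> ennreal (a\<^sup>2 + \<beta>\<^sup>2 * F.expectation (\<lambda>w. (X w)\<^sup>2))"
    using X X2 by (rule F.nn_integral_square_centered_le)
  also have "\<dots> \<le> ennreal (a\<^sup>2 + \<beta>\<^sup>2 * (\<kappa> + 2))"
    using EX2 by (intro ennreal_leI add_left_mono mult_left_mono) auto
  finally show ?thesis .
qed

lemma nn_integral_draw_noise_le:
  assumes P: "prob_space P" "sets P = sets borel"
    and spectral: "\<And>x z. K x z = (\<integral>\<omega>. (\<integral>b. rff \<omega> b x * rff \<omega> b z \<partial>phase_measure) \<partial>P)"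
    and diag: "\<And>x. K x x \<le> \<kappa>"
    and \<beta>: "\<And>i. (\<beta> i)\<^sup>2 \<le> C"
  shows "(\<integral>\<^sup>+(i, \<omega>, b). ennreal ((a - \<beta> i * (rff \<omega> b (xs i) * rff \<omega> b z - K (xs i) z))\<^sup>2)
      \<partial>draw_measure N P) \<le> ennreal (a\<^sup>2 + C * (\<kappa> + 2))"
proof -
  interpret F: prob_space "feature_measure P"
    using P(1) by (rule prob_space_feature_measure)
  let ?I = "measure_pmf (pmf_of_set {..<N})"
  have \<kappa>: "0 \<le> \<kappa> + 2"
    using kernel_diag_nonneg[where K=K, OF spectral[of z z]] diag[of z] by simp
  define noise where "noise i = (\<lambda>(\<omega>, b). ennreal ((a - \<beta> i * (rff \<omega> b (xs i) * rff \<omega> b z - K (xs i) z))\<^sup>2))" for i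
  have noise_measurable: "(\<lambda>d. noise (fst d) (snd d)) \<in> borel_measurable (?I \<Otimes>\<^sub>M feature_measure P)"
  proof (rule measurable_compose_countable)
    show "(\<lambda>d. noise i (snd d)) \<in> borel_measurable (?I \<Otimes>\<^sub>M feature_measure P)" for i
      unfolding noise_def rff_def using P(2) by measurable
  qed (simp add: measurable_fst'')
  have "(\<integral>\<^sup>+d. noise (fst d) (snd d) \<partial>draw_measure N P) = (\<integral>\<^sup>+i. \<integral>\<^sup>+w. noise i w \<partial>feature_measure P \<partial>?I)"
    unfolding draw_measure_def using F.nn_integral_fst[OF noise_measurable] by simp
  also have "\<dots> \<le> (\<integral>\<^sup>+i. ennreal (a\<^sup>2 + C * (\<kappa> + 2)) \<partial>?I)"
  proof (rule nn_integral_mono)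
    fix i
    have "(\<integral>\<^sup>+w. noise i w \<partial>feature_measure P) \<le> ennreal (a\<^sup>2 + (\<beta> i)\<^sup>2 * (\<kappa> + 2))"
      unfolding noise_def using P spectral diag by (rule nn_integral_rff_noise_le)
    also have "\<dots> \<le> ennreal (a\<^sup>2 + C * (\<kappa> + 2))"
      using \<beta> \<kappa> by (intro ennreal_leI add_left_mono mult_right_mono)
    finally show "(\<integral>\<^sup>+w. noise i w \<partial>feature_measure P) \<le> ennreal (a\<^sup>2 + C * (\<kappa> + 2))" .
  qed
  also have "\<dots> = ennreal (a\<^sup>2 + C * (\<kappa> + 2))"
    by (simp add: measure_pmf.emeasure_space_1)
  finally show ?thesis
    by (simp add: noise_def case_prod_unfold)
qed

lemma f_iter_prefix_cong:
  "(\<And>i. i < t \<Longrightarrow> s i = s' i) \<Longrightarrow> f_iter Ld xs ys \<gamma> lam s t = f_iter Ld xs ys \<gamma> lam s' t"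
  by (induction t) (auto simp: Let_def split_beta)

lemma h_iter_prefix_cong:
  "(\<And>i. i < t \<Longrightarrow> s i = s' i) \<Longrightarrow> h_iter Ld K xs ys \<gamma> lam s t = h_iter Ld K xs ys \<gamma> lam s' t"
proof (induction t)
  case (Suc t)
  then show ?case
    using f_iter_prefix_cong[of t s s'] by (auto simp: Let_def split_beta)
qed simp

lemma f_iter_minus_h_iter_Suc:
  "f_iter Ld xs ys \<gamma> lam (s(t := (i, \<omega>, b))) (Suc t) x - h_iter Ld K xs ys \<gamma> lam (s(t := (i, \<omega>, b))) (Suc t) x
   = (1 - \<gamma> * lam) * (f_iter Ld xs ys \<gamma> lam s t x - h_iter Ld K xs ys \<gamma> lam s t x)
     - \<gamma> * Ld (f_iter Ld xs ys \<gamma> lam s t (xs i)) (ys i) * (rff \<omega> b (xs i) * rff \<omega> b x - K (xs i) x)"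
proof -
  have "f_iter Ld xs ys \<gamma> lam (s(t := (i, \<omega>, b))) t = f_iter Ld xs ys \<gamma> lam s t"
    by (rule f_iter_prefix_cong) simp
  moreover have "h_iter Ld K xs ys \<gamma> lam (s(t := (i, \<omega>, b))) t = h_iter Ld K xs ys \<gamma> lam s t"
    by (rule h_iter_prefix_cong) simp
  ultimately show ?thesis
    by (simp add: Let_def algebra_simps)
qed

lemma measurable_draw_index:
  assumes "t \<in> I"
  shows "(\<lambda>s. fst (s t)) \<in> measurable (PiM I (\<lambda>_. draw_measure N P)) (count_space UNIV)"
proof -
  have "fst \<in> measurable (draw_measure N P) (count_space UNIV)"
    unfolding draw_measure_def
    using measurable_fst[of "measure_pmf (pmf_of_set {..<N})" "feature_measure P"] by simp
  then show ?thesis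
    using assms by measurable
qed

lemma measurable_draw_rff:
  assumes "sets P = sets borel" "t \<in> I"
  shows "(\<lambda>s. rff (fst (snd (s t))) (snd (snd (s t))) y) \<in> borel_measurable (PiM I (\<lambda>_. draw_measure N P))"
proof -
  have "(\<lambda>d. rff (fst (snd d)) (snd (snd d)) y) \<in> borel_measurable (draw_measure N P)"
    unfolding draw_measure_def rff_def using assms(1) by measurable
  then show ?thesis
    using assms(2) by measurable
qed

lemma measurable_f_iter:
  assumes P: "sets P = sets borel" and Ld: "\<And>y. (\<lambda>u. Ld u y) \<in> borel_measurable borel"
  shows "t \<le> T \<Longrightarrow> (\<lambda>s. f_iter Ld xs ys \<gamma> lam s t z) \<in> borel_measurable (PiM {..<T} (\<lambda>_. draw_measure N P))"
proof (induction t arbitrary: z)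
  case (Suc t)
  then have t: "t \<in> {..<T}"
    by simp
  define F where "F i s = f_iter Ld xs ys \<gamma> lam s t z - \<gamma> * (Ld (f_iter Ld xs ys \<gamma> lam s t (xs i)) (ys i)
       * rff (fst (snd (s t))) (snd (snd (s t))) (xs i) * rff (fst (snd (s t))) (snd (snd (s t))) z
       + lam * f_iter Ld xs ys \<gamma> lam s t z)" for i s
  have unfold_step: "(\<lambda>s. f_iter Ld xs ys \<gamma> lam s (Suc t) z) = (\<lambda>s. F (fst (s t)) s)"
    by (simp add: F_def fun_eq_iff Let_def split_beta)
  have F_measurable: "F i \<in> borel_measurable (PiM {..<T} (\<lambda>_. draw_measure N P))" for i
    unfolding F_def using Suc.prems
    by (intro borel_measurable_diff borel_measurable_times borel_measurable_add borel_measurable_const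
        measurable_compose[OF _ Ld] measurable_draw_rff[OF P t] Suc.IH) simp_all
  show ?case
    unfolding unfold_step by (rule measurable_compose_countable[OF F_measurable measurable_draw_index[OF t]])
qed simp

lemma measurable_h_iter:
  assumes P: "sets P = sets borel" and Ld: "\<And>y. (\<lambda>u. Ld u y) \<in> borel_measurable borel"
  shows "t \<le> T \<Longrightarrow> (\<lambda>s. h_iter Ld K xs ys \<gamma> lam s t z) \<in> borel_measurable (PiM {..<T} (\<lambda>_. draw_measure N P))"
proof (induction t arbitrary: z)
  case (Suc t)
  then have t: "t \<in> {..<T}"
    by simp
  define H where "H i s = h_iter Ld K xs ys \<gamma> lam s t z - \<gamma> * (Ld (f_iter Ld xs ys \<gamma> lam s t (xs i)) (ys i)
       * K (xs i) z + lam * h_iter Ld K xs ys \<gamma> lam s t z)" for i s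
  have unfold_step: "(\<lambda>s. h_iter Ld K xs ys \<gamma> lam s (Suc t) z) = (\<lambda>s. H (fst (s t)) s)"
    by (simp add: H_def fun_eq_iff Let_def split_beta)
  have H_measurable: "H i \<in> borel_measurable (PiM {..<T} (\<lambda>_. draw_measure N P))" for i
    unfolding H_def using Suc.prems
    by (intro borel_measurable_diff borel_measurable_times borel_measurable_add borel_measurable_const
        measurable_compose[OF _ Ld] measurable_f_iter[OF P Ld] Suc.IH) simp_all
  show ?case
    unfolding unfold_step by (rule measurable_compose_countable[OF H_measurable measurable_draw_index[OF t]])
qed simp

lemma mean_square_gap_Suc_le:
  fixes Ld :: "real \<Rightarrow> real \<Rightarrow> real"
  assumes P: "prob_space P" "sets P = sets borel"
    and spectral: "\<And>x z. K x z = (\<integral>\<omega>. (\<integral>b. rff \<omega> b x * rff \<omega> b z \<partial>phase_measure) \<partial>P)"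
    and diag: "\<And>x. K x x \<le> \<kappa>"
    and Ld_measurable: "\<And>y. (\<lambda>u. Ld u y) \<in> borel_measurable borel"
    and Ld_bound: "\<And>u y. \<bar>Ld u y\<bar> \<le> M"
  shows "(\<integral>\<^sup>+s. ennreal ((f_iter Ld xs ys \<gamma> lam s (Suc t) x - h_iter Ld K xs ys \<gamma> lam s (Suc t) x)\<^sup>2)
            \<partial>PiM {..<Suc t} (\<lambda>_. draw_measure N P))
    \<le> ennreal ((1 - \<gamma> * lam)\<^sup>2) * (\<integral>\<^sup>+s. ennreal ((f_iter Ld xs ys \<gamma> lam s t x - h_iter Ld K xs ys \<gamma> lam s t x)\<^sup>2)
            \<partial>PiM {..<t} (\<lambda>_. draw_measure N P)) + ennreal (\<gamma>\<^sup>2 * M\<^sup>2 * (\<kappa> + 2))"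
proof -
  let ?D = "draw_measure N P"
  let ?G = "\<lambda>s t. f_iter Ld xs ys \<gamma> lam s t x - h_iter Ld K xs ys \<gamma> lam s t x"
  let ?E = "\<gamma>\<^sup>2 * M\<^sup>2 * (\<kappa> + 2)"
  interpret product_sigma_finite "\<lambda>_. ?D"
    by (intro product_sigma_finite.intro prob_space_imp_sigma_finite prob_space_draw_measure P(1))
  interpret Pi: prob_space "PiM {..<t} (\<lambda>_. ?D)"
    by (intro prob_space_PiM prob_space_draw_measure P(1))
  have G_measurable: "(\<lambda>s. ?G s t') \<in> borel_measurable (PiM {..<T} (\<lambda>_. ?D))" if "t' \<le> T" for t' T
    using measurable_f_iter[OF P(2) Ld_measurable that] measurable_h_iter[OF P(2) Ld_measurable that]
    by (rule borel_measurable_diff)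
  have \<kappa>: "0 \<le> \<kappa> + 2"
    using kernel_diag_nonneg[where K=K, OF spectral[of x x]] diag[of x] by simp
  have step_le: "(\<integral>\<^sup>+d. ennreal ((?G (s(t := d)) (Suc t))\<^sup>2) \<partial>?D)
      \<le> ennreal (((1 - \<gamma> * lam) * ?G s t)\<^sup>2 + ?E)" for s
  proof -
    let ?\<beta> = "\<lambda>i. \<gamma> * Ld (f_iter Ld xs ys \<gamma> lam s t (xs i)) (ys i)"
    have "(Ld u y)\<^sup>2 \<le> M\<^sup>2" for u y
      using power_mono[OF Ld_bound[of u y] abs_ge_zero, of 2] by simp
    then have \<beta>: "(?\<beta> i)\<^sup>2 \<le> \<gamma>\<^sup>2 * M\<^sup>2" for i
      by (simp add: power_mult_distrib mult_left_mono)
    have "(\<integral>\<^sup>+d. ennreal ((?G (s(t := d)) (Suc t))\<^sup>2) \<partial>?D)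
        = (\<integral>\<^sup>+(i, \<omega>, b). ennreal (((1 - \<gamma> * lam) * ?G s t - ?\<beta> i * (rff \<omega> b (xs i) * rff \<omega> b x - K (xs i) x))\<^sup>2) \<partial>?D)"
      by (intro nn_integral_cong) (auto simp del: f_iter.simps h_iter.simps simp: f_iter_minus_h_iter_Suc mult.assoc)
    also have "\<dots> \<le> ennreal (((1 - \<gamma> * lam) * ?G s t)\<^sup>2 + \<gamma>\<^sup>2 * M\<^sup>2 * (\<kappa> + 2))"
      using P spectral diag \<beta> by (rule nn_integral_draw_noise_le)
    finally show ?thesis
      by (simp add: mult.assoc)
  qed
  have "(\<integral>\<^sup>+s. ennreal ((?G s (Suc t))\<^sup>2) \<partial>PiM {..<Suc t} (\<lambda>_. ?D))
      = (\<integral>\<^sup>+s. (\<integral>\<^sup>+d. ennreal ((?G (s(t := d)) (Suc t))\<^sup>2) \<partial>?D) \<partial>PiM {..<t} (\<lambda>_. ?D))"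
    using G_measurable[of "Suc t" "Suc t"] unfolding lessThan_Suc
    by (intro product_nn_integral_insert) auto
  also have "\<dots> \<le> (\<integral>\<^sup>+s. ennreal ((1 - \<gamma> * lam)\<^sup>2) * ennreal ((?G s t)\<^sup>2) + ennreal ?E \<partial>PiM {..<t} (\<lambda>_. ?D))"
    using step_le \<kappa>
    by (intro nn_integral_mono) (simp add: power_mult_distrib ennreal_mult)
  also have "\<dots> = ennreal ((1 - \<gamma> * lam)\<^sup>2) * (\<integral>\<^sup>+s. ennreal ((?G s t)\<^sup>2) \<partial>PiM {..<t} (\<lambda>_. ?D)) + ennreal ?E"
    using G_measurable[of t t] by (simp add: nn_integral_add nn_integral_cmult Pi.emeasure_space_1)
  finally show ?thesis .
qed

lemma ennreal_affine_recursion_le: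
  fixes A :: "nat \<Rightarrow> ennreal"
  assumes A0: "A 0 = 0" and step: "\<And>t. A (Suc t) \<le> ennreal c * A t + ennreal e"
    and c: "0 \<le> c" "c < 1" and e: "0 \<le> e"
  shows "A t \<le> ennreal (e / (1 - c))"
proof -
  define R where "R = e / (1 - c)"
  have R: "0 \<le> R"
    unfolding R_def using c e by simp
  have fixpoint: "c * R + e = R"
    unfolding R_def using c(2) by (simp add: field_simps)
  have "A t \<le> ennreal R"
  proof (induction t)
    case (Suc t)
    have "A (Suc t) \<le> ennreal c * ennreal R + ennreal e"
      using step[of t] Suc.IH by (meson add_right_mono mult_left_mono order_trans zero_le)
    also have "\<dots> = ennreal (c * R + e)"
      using c e R by (simp add: ennreal_mult)
    finally show ?case
      unfolding fixpoint .
  qed (simp add: A0)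
  then show ?thesis
    unfolding R_def .
qed

lemma contraction_fixpoint_le:
  fixes \<gamma> lam B :: real
  assumes "0 < \<gamma>" "0 < lam" "\<gamma> * lam < 1" "0 \<le> B"
  shows "\<gamma>\<^sup>2 * B / (1 - (1 - \<gamma> * lam)\<^sup>2) \<le> B * \<gamma> / lam"
proof -
  have "1 - (1 - \<gamma> * lam)\<^sup>2 = \<gamma> * lam * (2 - \<gamma> * lam)"
    by (simp add: power2_eq_square algebra_simps)
  also have "\<dots> \<ge> \<gamma> * lam * 1"
    using assms by (intro mult_left_mono) auto
  finally have denom: "\<gamma> * lam \<le> 1 - (1 - \<gamma> * lam)\<^sup>2"
    by simp
  have "0 < \<gamma> * lam"
    using assms by simp
  then have "0 < (1 - (1 - \<gamma> * lam)\<^sup>2) * (\<gamma> * lam)"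
    using denom by simp
  then have "\<gamma>\<^sup>2 * B / (1 - (1 - \<gamma> * lam)\<^sup>2) \<le> \<gamma>\<^sup>2 * B / (\<gamma> * lam)"
    using denom assms(4) by (intro divide_left_mono) auto
  also have "\<dots> = B * \<gamma> / lam"
    using assms by (simp add: power2_eq_square field_simps)
  finally show ?thesis .
qed

lemma add_two_le_sqrt_sum_square:
  fixes \<kappa> \<phi> :: real
  assumes "0 \<le> \<kappa>" "2 \<le> \<phi>"
  shows "\<kappa> + 2 \<le> (sqrt \<kappa> + sqrt \<phi>)\<^sup>2"
proof -
  have "\<kappa> + 2 \<le> \<kappa> + \<phi>"
    using assms by simp
  also have "\<dots> \<le> (sqrt \<kappa> + sqrt \<phi>)\<^sup>2"
    using assms by (simp add: power2_sum)
  finally show ?thesis .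
qed

theorem lemma3:
  fixes N :: nat and xs :: "nat \<Rightarrow> 'a::euclidean_space" and ys :: "nat \<Rightarrow> real"
    and K :: "'a \<Rightarrow> 'a \<Rightarrow> real" and P :: "'a measure"
    and L Ld :: "real \<Rightarrow> real \<Rightarrow> real"
    and lam \<gamma> M Lc \<kappa> \<phi> :: real
  assumes N: "N \<ge> 1"
    and K_cont: "continuous_on UNIV (\<lambda>(x, x'). K x x')"
    and K_sym: "\<And>x x'. K x x' = K x' x"
    and K_shift: "\<exists>k. \<forall>x x'. K x x' = k (x - x')"
    and K_pd: "\<And>(n::nat) c (z::nat \<Rightarrow> 'a). (\<Sum>i<n. \<Sum>j<n. c i * c j * K (z i) (z j)) \<ge> 0"
    and P_prob: "prob_space P" and P_sets: "sets P = sets borel"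
    and K_spectral: "\<And>x x'. K x x' =
          (\<integral>\<omega>. (\<integral>b. rff \<omega> b x * rff \<omega> b x' \<partial>uniform_measure lborel {0..2*pi}) \<partial>P)"
    and lam: "lam > 0"
    and L_convex: "\<And>y. convex_on UNIV (\<lambda>u. L u y)"
    and L_deriv: "\<And>u y. ((\<lambda>v. L v y) has_real_derivative Ld u y) (at u)"
    and Ld_bound: "\<And>u y. \<bar>Ld u y\<bar> < M"
    and L_lip: "\<And>y. Lc-lipschitz_on UNIV (\<lambda>u. L u y)"
    and Ld_lip: "\<And>y. Lc-lipschitz_on UNIV (\<lambda>u. Ld u y)"
    and K_bound: "\<And>x x'. K x x' \<le> \<kappa>"
    and phi_bound: "\<And>(\<omega>::'a) b x x'. \<bar>rff \<omega> b x * rff \<omega> b x'\<bar> \<le> \<phi>"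
    and gam: "0 < \<gamma>" "\<gamma> < 1 / lam"
  shows "(\<integral>\<^sup>+ s. ennreal (\<bar>f_iter Ld xs ys \<gamma> lam s t x - h_iter Ld K xs ys \<gamma> lam s t x\<bar>\<^sup>2)
            \<partial>(PiM {..<t} (\<lambda>_. draw_measure N P)))
         \<le> ennreal (M\<^sup>2 * (sqrt \<kappa> + sqrt \<phi>)\<^sup>2 * \<gamma> / lam)"
proof -
  let ?c = "(1 - \<gamma> * lam)\<^sup>2" and ?E = "\<gamma>\<^sup>2 * M\<^sup>2 * (\<kappa> + 2)"
  have Ld_measurable: "(\<lambda>u. Ld u y) \<in> borel_measurable borel" for y
    using lipschitz_on_continuous_on[OF Ld_lip] by (rule borel_measurable_continuous_onI)
  have \<kappa>: "0 \<le> \<kappa>"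
    using kernel_diag_nonneg[where K=K, OF K_spectral[of x x]] K_bound[of x x] by simp
  have \<phi>: "2 \<le> \<phi>"
    using phi_bound[of 0 0 0 0] by (simp add: rff_def)
  have \<gamma>_lam: "0 < \<gamma> * lam" "\<gamma> * lam < 1"
    using gam lam by (simp_all add: field_simps)
  define A where "A t = (\<integral>\<^sup>+s. ennreal ((f_iter Ld xs ys \<gamma> lam s t x - h_iter Ld K xs ys \<gamma> lam s t x)\<^sup>2)
          \<partial>PiM {..<t} (\<lambda>_. draw_measure N P))" for t
  have "A t \<le> ennreal (?E / (1 - ?c))"
  proof (rule ennreal_affine_recursion_le)
    show "A (Suc t') \<le> ennreal ?c * A t' + ennreal ?E" for t'
      unfolding A_def using P_prob P_sets K_spectral K_bound Ld_measurable less_imp_le[OF Ld_bound]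
      by (rule mean_square_gap_Suc_le)
    show "?c < 1"
      using \<gamma>_lam by (simp add: power_less_one_iff)
  qed (use \<kappa> in \<open>simp_all add: A_def\<close>)
  also have "?E / (1 - ?c) \<le> M\<^sup>2 * (\<kappa> + 2) * \<gamma> / lam"
    using contraction_fixpoint_le[of \<gamma> lam "M\<^sup>2 * (\<kappa> + 2)"] gam lam \<gamma>_lam \<kappa>
    by (simp add: mult.assoc)
  also have "\<dots> \<le> M\<^sup>2 * (sqrt \<kappa> + sqrt \<phi>)\<^sup>2 * \<gamma> / lam"
    using add_two_le_sqrt_sum_square[OF \<kappa> \<phi>] gam lam
    by (intro divide_right_mono mult_right_mono mult_left_mono) auto
  finally show ?thesis
    unfolding power2_abs A_def[symmetric] by (simp add: ennreal_leI)
qed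

end
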